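(* Consider the binary symmetric channel with a single error. Let $n\ge2$ and $1\le k\le n-1$, and suppose there is a single-error-correcting transmission strategy of length $n-1$ with $k-1$ feedbacks transmitting $M(n-1)$ messages. Let $$U(n)=2\left\lfloor\frac{2^n}{2(n+1)}\right\rfloor,\qquad r(n)=2^n-(n+1)U(n).$$ Then there is a single-error-correcting transmission strategy of length $n$ with $k$ feedbacks transmitting $M(n)$ messages, where $$M(n)=\begin{cases}2M(n-1) & \text{if } 2M(n-1)\le \frac{2^n}{n+1},\\ U(n) & \text{if } 2M(n-1)>\frac{2^n}{n+1}\text{ and } r(n)<2n,\\ U(n)+1 & \text{if } 2M(n-1)>\frac{2^n}{n+1}\text{ and } r(n)\ge 2n.\end{cases}$$
   Context: Binary symmetric channel: alphabet $\{0,1\}$, an error replaces a symbol by the other symbol; "a single error" means at most one error during the whole transmission. A strategy of length $n$ with $k$ feedbacks: $n=n_1+\cdots+n_{k+1}$; for a message $m\in[M]$, the first $n_1$ symbols depend only on $m$; after $N_{i-1}=n_1+\cdots+n_{i-1}$ symbols have been sent ($i\ge2$), the encoder knows (error-free, instantaneously) the $N_{i-1}$ received symbols, and the $i$th block of $n_i$ symbols is a function of $m$ and these received symbols. $k=0$ means no feedback. The strategy transmits $M$ messages with a single error if the sets of output sequences reachable from distinct messages with at most one error are pairwise disjoint. *)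

theory Defs
  imports Complex_Main
begin

(* A strategy of length n with k feedbacks is given by the set F of feedback
   times {N_1,...,N_k} (N_i = n_1+...+n_i), which are k distinct numbers in
   {1..n-1} (all block lengths n_i positive), and an encoder
   enc m ys t : the symbol sent at time t (0-based) for message m, given the
   received symbols ys known to the encoder at that time.  The encoder only
   ever gets the received symbols up to the last feedback time <= t. *)

definition last_fb :: "nat set \<Rightarrow> nat \<Rightarrow> nat" where
  "last_fb F t = Max (insert 0 {j \<in> F. j \<le> t})"

fun received :: "nat set \<Rightarrow> (nat \<Rightarrow> bool list \<Rightarrow> nat \<Rightarrow> bool) \<Rightarrow> nat \<Rightarrow> nat option \<Rightarrow> nat \<Rightarrow> bool list" where
  "received F enc m e 0 = []"
| "received F enc m e (Suc t) =
     (let ys = received F enc m e t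
      in ys @ [enc m (take (last_fb F t) ys) t \<noteq> (e = Some t)])"

definition outputs :: "nat \<Rightarrow> nat set \<Rightarrow> (nat \<Rightarrow> bool list \<Rightarrow> nat \<Rightarrow> bool) \<Rightarrow> nat \<Rightarrow> bool list set" where
  "outputs n F enc m = {received F enc m e n | e. e = None \<or> (\<exists>s<n. e = Some s)}"

definition single_error_strategy :: "nat \<Rightarrow> nat \<Rightarrow> nat \<Rightarrow> bool" where
  "single_error_strategy n k M \<longleftrightarrow>
     (\<exists>F enc. F \<subseteq> {1..<n} \<and> card F = k \<and>
        (\<forall>m<M. \<forall>m'<M. m \<noteq> m' \<longrightarrow> outputs n F enc m \<inter> outputs n F enc m' = {}))"

definition U_n :: "nat \<Rightarrow> nat" where
  "U_n n = 2 * nat \<lfloor>(2::real) ^ n / (2 * (real n + 1))\<rfloor>"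

definition r_n :: "nat \<Rightarrow> int" where
  "r_n n = 2 ^ n - (int n + 1) * int (U_n n)"

definition Mnext :: "nat \<Rightarrow> nat \<Rightarrow> nat" where
  "Mnext n Mprev =
     (if real (2 * Mprev) \<le> 2 ^ n / (real n + 1) then 2 * Mprev
      else if r_n n < 2 * int n then U_n n else U_n n + 1)"

end

theory Submission
  imports Defs
begin

(* Split the messages into two classes of sizes a0 and a1 <= M(n-1), send the class bit first and
   use a feedback right after it.  If the bit arrived intact, the message may still suffer one
   error, and the encoder runs the old strategy of length n-1 on the index of the message in its
   class; if the bit was flipped, the error is spent and a fixed word suffices.  So for each
   received first bit y, a_y old output sets (of size at most n) and a_(not y) single words must
   be pairwise disjoint in {0,1}^(n-1), which a counting argument provides as soon as
   a_y * n + a_(not y) <= 2^(n-1).  The three cases of M(n) are admissible choices of a0 and a1. *)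

lemma received_cong:
  assumes "enc m = enc' m'"
  shows "received F enc m e t = received F enc' m' e t"
  using assms by (induction t) (simp_all add: Let_def)

lemma outputs_cong:
  assumes "enc m = enc' m'"
  shows "outputs n F enc m = outputs n F enc' m'"
  unfolding outputs_def using received_cong[of enc m enc' m', OF assms] by simp

lemma received_fixed_word:
  assumes "t \<le> length w"
  shows "received F (\<lambda>_ _ t. w ! t) m None t = take t w"
  using assms by (induction t) (simp_all add: Let_def take_Suc_conv_app_nth)

lemma outputs_eq_image:
  "outputs n F enc m = (\<lambda>e. received F enc m e n) ` insert None (Some ` {..<n})"
  unfolding outputs_def by auto

lemma finite_outputs: "finite (outputs n F enc m)"
  by (simp add: outputs_eq_image)

lemma card_outputs_le: "card (outputs n F enc m) \<le> Suc n"
proof -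
  have "card (outputs n F enc m) \<le> card (insert None (Some ` {..<n}))"
    unfolding outputs_eq_image by (rule card_image_le) simp
  also have "\<dots> = Suc n"
    by (simp add: card_image)
  finally show ?thesis .
qed

lemma U_n_Suc: "U_n (Suc n) = 2 * (2 ^ n div (n + 2))"
proof -
  have "(2::real) ^ Suc n / (2 * (real (Suc n) + 1)) = real (2 ^ n) / real (n + 2)"
    by (simp add: field_simps)
  then show ?thesis
    unfolding U_n_def by (simp only: floor_divide_of_nat_eq)
qed

lemma r_n_Suc: "r_n (Suc n) = 2 * int (2 ^ n mod (n + 2))"
proof -
  have "int (2 ^ n) = int (2 ^ n div (n + 2)) * int (n + 2) + int (2 ^ n mod (n + 2))"
    by (metis div_mult_mod_eq of_nat_add of_nat_mult)
  then show ?thesis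
    by (simp add: r_n_def U_n_Suc algebra_simps)
qed

lemma Mnext_Suc:
  "Mnext (Suc n) M =
    (if M * (n + 2) \<le> 2 ^ n then 2 * M
     else if 2 ^ n mod (n + 2) \<le> n then 2 * (2 ^ n div (n + 2))
     else 2 * (2 ^ n div (n + 2)) + 1)"
proof -
  have "real (2 * M) \<le> 2 ^ Suc n / (real (Suc n) + 1) \<longleftrightarrow> real (M * (n + 2)) \<le> real (2 ^ n)"
    by (simp add: field_simps, linarith)
  then have small: "real (2 * M) \<le> 2 ^ Suc n / (real (Suc n) + 1) \<longleftrightarrow> M * (n + 2) \<le> 2 ^ n"
    by (simp only: of_nat_le_iff)
  have rem: "r_n (Suc n) < 2 * int (Suc n) \<longleftrightarrow> 2 ^ n mod (n + 2) \<le> n"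
    by (simp add: r_n_Suc, linarith)
  show ?thesis
    by (simp only: Mnext_def small rem U_n_Suc)
qed

lemma Mnext_Suc_split:
  obtains a0 a1 where "Mnext (Suc n) M = a0 + a1" and "a0 \<le> M" and "a1 \<le> M"
    and "a0 * (n + 1) + a1 \<le> 2 ^ n" and "a1 * (n + 1) + a0 \<le> 2 ^ n"
proof -
  define q where "q = 2 ^ n div (n + 2)"
  define r where "r = 2 ^ n mod (n + 2)"
  have pow: "2 ^ n = q * (n + 1) + q + r"
    using div_mult_mod_eq[of "2 ^ n" "n + 2"] by (simp add: q_def r_def algebra_simps)
  have "r < n + 2"
    by (simp add: r_def)
  have M: "Mnext (Suc n) M =
      (if M * (n + 1) + M \<le> 2 ^ n then M + M else if r \<le> n then q + q else (q + 1) + q)"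
    unfolding Mnext_Suc q_def[symmetric] r_def[symmetric] by simp
  have q_lt: "q < M" if "\<not> M * (n + 1) + M \<le> 2 ^ n"
  proof -
    have "q * (n + 2) < M * (n + 2)"
      using that pow by simp
    then show ?thesis
      by (simp only: mult_less_cancel2)
  qed
  consider (small) "M * (n + 1) + M \<le> 2 ^ n"
    | (even) "\<not> M * (n + 1) + M \<le> 2 ^ n" "r \<le> n"
    | (odd) "\<not> M * (n + 1) + M \<le> 2 ^ n" "r = n + 1"
    using \<open>r < n + 2\<close> by linarith
  then show thesis
  proof cases
    case small
    then show thesis
      using M by (intro that[of M M]) simp_all
  next
    case even
    then show thesis
      using M q_lt pow by (intro that[of q q]) simp_all
  next
    case odd
    then show thesis
      using M q_lt pow by (intro that[of "q + 1" q]) simp_all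
  qed
qed

lemma last_fb_insert_1_Suc:
  assumes "finite F"
  shows "last_fb (insert 1 (Suc ` F)) (Suc t) = Suc (last_fb F t)"
proof -
  define S where "S = {j \<in> F. j \<le> t}"
  have "finite S"
    using assms by (simp add: S_def)
  have "{j \<in> insert 1 (Suc ` F). j \<le> Suc t} = insert 1 (Suc ` S)"
    by (auto simp: S_def)
  moreover have "Max (insert 0 (insert 1 (Suc ` S))) = Suc (Max (insert 0 S))"
  proof (rule antisym)
    show "Max (insert 0 (insert 1 (Suc ` S))) \<le> Suc (Max (insert 0 S))"
      using \<open>finite S\<close> by (auto intro!: Max.boundedI)
    have "Max (insert 0 S) \<in> insert 0 S"
      using \<open>finite S\<close> by (intro Max_in) auto
    then show "Suc (Max (insert 0 S)) \<le> Max (insert 0 (insert 1 (Suc ` S)))"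
      using \<open>finite S\<close> by (auto intro!: Max_ge)
  qed
  ultimately show ?thesis
    unfolding last_fb_def S_def by simp
qed

definition branch_enc ::
    "(nat \<Rightarrow> bool) \<Rightarrow> (bool \<Rightarrow> nat \<Rightarrow> bool list \<Rightarrow> nat \<Rightarrow> bool) \<Rightarrow> nat \<Rightarrow> bool list \<Rightarrow> nat \<Rightarrow> bool" where
  "branch_enc b cont m ys t = (case t of 0 \<Rightarrow> b m | Suc t' \<Rightarrow> cont (hd ys) m (tl ys) t')"

lemma received_branch_enc:
  assumes "finite F" and "e = Some 0 \<and> e' = None \<or> e = map_option Suc e'"
    and "y = (b m \<noteq> (e = Some 0))"
  shows "received (insert 1 (Suc ` F)) (branch_enc b cont) m e (Suc t) = y # received F (cont y) m e' t"
proof (induction t)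
  case 0
  show ?case
    by (simp add: assms(3) branch_enc_def)
next
  case (Suc t)
  have "e = Some (Suc t) \<longleftrightarrow> e' = Some t"
    using assms(2) by auto
  with Suc show ?case
    by (simp add: Let_def last_fb_insert_1_Suc[OF assms(1), simplified] branch_enc_def)
qed

(* A message whose first bit was flipped has spent its error, so only its error-free
   continuation can follow. *)
definition suffix_outputs ::
    "nat \<Rightarrow> nat set \<Rightarrow> (nat \<Rightarrow> bool) \<Rightarrow> (bool \<Rightarrow> nat \<Rightarrow> bool list \<Rightarrow> nat \<Rightarrow> bool) \<Rightarrow> bool \<Rightarrow> nat \<Rightarrow> bool list set" where
  "suffix_outputs n F b cont y m =
     (if b m = y then outputs n F (cont y) m else {received F (cont y) m None n})"

lemma outputs_branch_enc:
  assumes "finite F"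
  shows "outputs (Suc n) (insert 1 (Suc ` F)) (branch_enc b cont) m =
    (\<Union>y. Cons y ` suffix_outputs n F b cont y m)"
proof -
  have errors: "insert None (Some ` {..<Suc n}) =
      insert (Some 0) (map_option Suc ` insert None (Some ` {..<n}))"
    by (auto simp: lessThan_Suc_eq_insert_0 image_image)
  have flip: "received (insert 1 (Suc ` F)) (branch_enc b cont) m (Some 0) (Suc n) =
      (\<not> b m) # received F (cont (\<not> b m)) m None n"
    by (rule received_branch_enc[OF assms]) simp_all
  have shift: "received (insert 1 (Suc ` F)) (branch_enc b cont) m (map_option Suc e) (Suc n) =
      b m # received F (cont (b m)) m e n" for e
    by (rule received_branch_enc[OF assms]) auto
  have "outputs (Suc n) (insert 1 (Suc ` F)) (branch_enc b cont) m =
      insert ((\<not> b m) # received F (cont (\<not> b m)) m None n)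
        (Cons (b m) ` outputs n F (cont (b m)) m)"
    unfolding outputs_eq_image errors image_insert image_image flip shift
    by (simp add: image_image)
  also have "\<dots> = (\<Union>y. Cons y ` suffix_outputs n F b cont y m)"
    unfolding suffix_outputs_def UN_bool_eq by (cases "b m") auto
  finally show ?thesis .
qed

lemma single_error_strategy_branch:
  assumes "F \<subseteq> {1..<n}" and "card F = k" and "1 \<le> n"
    and "\<And>y m m'. m < M \<Longrightarrow> m' < M \<Longrightarrow> m \<noteq> m' \<Longrightarrow>
      suffix_outputs n F b cont y m \<inter> suffix_outputs n F b cont y m' = {}"
  shows "single_error_strategy (Suc n) (Suc k) M"
  unfolding single_error_strategy_def
proof (intro exI conjI allI impI)
  have "finite F"
    using assms(1) finite_subset by blast
  show "insert 1 (Suc ` F) \<subseteq> {1..<Suc n}"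
    using assms(1,3) by auto
  have "1 \<notin> Suc ` F"
    using assms(1) by auto
  then show "card (insert 1 (Suc ` F)) = Suc k"
    using \<open>finite F\<close> assms(2) by (simp add: card_image)
  fix m m' assume "m < M" "m' < M" "m \<noteq> m'"
  then show "outputs (Suc n) (insert 1 (Suc ` F)) (branch_enc b cont) m \<inter>
      outputs (Suc n) (insert 1 (Suc ` F)) (branch_enc b cont) m' = {}"
    unfolding outputs_branch_enc[OF \<open>finite F\<close>] using assms(4) by blast
qed

lemma words_avoiding:
  assumes "finite X" and "card X + c \<le> 2 ^ n"
  obtains w :: "nat \<Rightarrow> bool list"
  where "inj_on w {..<c}" and "\<And>j. j < c \<Longrightarrow> length (w j) = n \<and> w j \<notin> X"
proof -
  define S where "S = {xs :: bool list. length xs = n} - X"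
  have "finite S"
    unfolding S_def using finite_lists_length_eq[of "UNIV :: bool set" n] by simp
  have "card {xs :: bool list. length xs = n} = 2 ^ n"
    using card_lists_length_eq[of "UNIV :: bool set" n] by simp
  then have "c \<le> card S"
    unfolding S_def using assms diff_card_le_card_Diff[OF assms(1), of "{xs. length xs = n}"]
    by linarith
  then obtain w where w: "w ` {..<c} \<subseteq> S" and "inj_on w {..<c}"
    using card_le_inj[OF finite_lessThan \<open>finite S\<close>, of c] by auto
  show thesis
  proof (rule that[OF \<open>inj_on w {..<c}\<close>])
    fix j assume "j < c"
    then show "length (w j) = n \<and> w j \<notin> X"
      using w by (auto simp: S_def)
  qed
qed

lemma single_error_strategy_Suc:
  assumes old: "single_error_strategy n k A" and "1 \<le> n"
    and "a0 \<le> A" and "a1 \<le> A"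
    and "a0 * (n + 1) + a1 \<le> 2 ^ n" and "a1 * (n + 1) + a0 \<le> 2 ^ n"
  shows "single_error_strategy (Suc n) (Suc k) (a0 + a1)"
proof -
  obtain F enc where F: "F \<subseteq> {1..<n}" "card F = k"
    and disj: "\<And>i i'. i < A \<Longrightarrow> i' < A \<Longrightarrow> i \<noteq> i' \<Longrightarrow>
      outputs n F enc i \<inter> outputs n F enc i' = {}"
    using old unfolding single_error_strategy_def by blast
  define a where "a y = (if y then a1 else a0)" for y
  define X where "X y = (\<Union>i<a y. outputs n F enc i)" for y
  have room: "card (X y) + a (\<not> y) \<le> 2 ^ n" for y
  proof -
    have "card (X y) \<le> (\<Sum>i<a y. card (outputs n F enc i))"
      unfolding X_def by (rule card_UN_le) simp
    also have "\<dots> \<le> (\<Sum>i<a y. n + 1)"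
      by (rule sum_mono) (simp add: card_outputs_le)
    finally show ?thesis
      using assms(5,6) by (cases y) (simp_all add: a_def)
  qed
  have "\<exists>w. inj_on w {..<a (\<not> y)} \<and> (\<forall>j<a (\<not> y). length (w j) = n \<and> w j \<notin> X y)" for y
    by (rule words_avoiding[OF _ room]) (auto simp: X_def finite_outputs)
  then obtain w where w_inj: "\<And>y. inj_on (w y) {..<a (\<not> y)}"
    and w: "\<And>y j. j < a (\<not> y) \<Longrightarrow> length (w y j) = n \<and> w y j \<notin> X y"
    by metis
  define b where "b m = (a0 \<le> m)" for m :: nat
  define idx where "idx m = (if b m then m - a0 else m)" for m
  have idx_lt: "idx m < a (b m)" if "m < a0 + a1" for m
    using that by (auto simp: idx_def a_def b_def)
  have idx_inj: "m = m'" if "b m = b m'" and "idx m = idx m'" for m m'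
    using that unfolding idx_def b_def by (cases "a0 \<le> m") auto
  define cont where
    "cont y m = (if b m = y then enc (idx m) else (\<lambda>_ t. w y (idx m) ! t))" for y m
  have suffix: "suffix_outputs n F b cont y m =
      (if b m = y then outputs n F enc (idx m) else {w y (idx m)})" if "m < a0 + a1" for y m
  proof (cases "b m = y")
    case True
    then have "cont y m = enc (idx m)"
      by (simp add: cont_def)
    then show ?thesis
      using True by (simp add: suffix_outputs_def outputs_cong[of "cont y" m enc "idx m"])
  next
    case False
    then have "length (w y (idx m)) = n"
      using w idx_lt[OF that] by auto
    have "received F (cont y) m None n = received F (\<lambda>_ _ t. w y (idx m) ! t) m None n"
      by (rule received_cong) (simp add: cont_def False)
    also have "\<dots> = w y (idx m)"
      using received_fixed_word[of n "w y (idx m)" F m] \<open>length (w y (idx m)) = n\<close> by simp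
    finally show ?thesis
      using False by (simp add: suffix_outputs_def)
  qed
  show ?thesis
  proof (rule single_error_strategy_branch[where b = b and cont = cont, OF F \<open>1 \<le> n\<close>])
    fix y m m' assume m: "m < a0 + a1" and m': "m' < a0 + a1" and "m \<noteq> m'"
    have "a y \<le> A" for y
      using assms(3,4) by (simp add: a_def)
    then have "idx m < A" and "idx m' < A"
      using idx_lt m m' order_less_le_trans by blast+
    have avoid: "w y (idx l') \<notin> outputs n F enc (idx l)"
      if "l < a0 + a1" "l' < a0 + a1" "b l = y" "b l' \<noteq> y" for l l'
      using w[of "idx l'" y] idx_lt[OF that(1)] idx_lt[OF that(2)] that(3,4)
      by (auto simp: X_def)
    have idx_ne: "idx m \<noteq> idx m'" if "b m = b m'"
      using idx_inj that \<open>m \<noteq> m'\<close> by blast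
    have w_ne: "w y (idx m) \<noteq> w y (idx m')" if "b m \<noteq> y" "b m' \<noteq> y"
      using idx_ne inj_onD[OF w_inj[of y]] idx_lt[OF m] idx_lt[OF m'] that
      by auto
    show "suffix_outputs n F b cont y m \<inter> suffix_outputs n F b cont y m' = {}"
      unfolding suffix[OF m] suffix[OF m']
      using disj[OF \<open>idx m < A\<close> \<open>idx m' < A\<close>] idx_ne w_ne avoid[OF m m'] avoid[OF m' m]
      by auto
  qed
qed

theorem theorem2:
  fixes n k Mprev :: nat
  assumes "n \<ge> 2" and "1 \<le> k" and "k \<le> n - 1"
    and "single_error_strategy (n - 1) (k - 1) Mprev"
  shows "single_error_strategy n k (Mnext n Mprev)"
proof -
  obtain n' where n: "n = Suc n'" and "1 \<le> n'"
    using assms(1) by (cases n) auto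
  obtain k' where k: "k = Suc k'"
    using assms(2) by (cases k) auto
  have old: "single_error_strategy n' k' Mprev"
    using assms(4) by (simp add: n k)
  obtain a0 a1 where "Mnext (Suc n') Mprev = a0 + a1" and "a0 \<le> Mprev" and "a1 \<le> Mprev"
    and "a0 * (n' + 1) + a1 \<le> 2 ^ n'" and "a1 * (n' + 1) + a0 \<le> 2 ^ n'"
    by (rule Mnext_Suc_split)
  moreover have "single_error_strategy (Suc n') (Suc k') (a0 + a1)"
    by (rule single_error_strategy_Suc[OF old \<open>1 \<le> n'\<close>]) fact+
  ultimately show ?thesis
    by (simp add: n k)
qed

end
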